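(* For all $n\ge 1$, \[ v_{n,i}=\begin{cases}(2n-i)\,v_{n-1,i}+(i-1)\,v_{n-1,i-1}, & 1\le i\le 2n,\\ (2n-1)!!, & i=2n+1,\end{cases} \] where $v_{m,i}=0$ whenever $i<1$ or $i>2m+1$, and $v_{0,1}=0$.
   Context: For $n\ge 0$, let $\mathcal{C}^*_{n,1}$ be the set of fillings, bijectively with the integers $1,\dots,2n+1$, of the three-row shape having one top-row cell in column $1$, middle-row cells in columns $1,\dots,n$ and bottom-row cells in columns $1,\dots,n$, such that entries increase from left to right along the middle row and from bottom to top within each column, with no condition among entries of the bottom row. (For $n=0$ the shape is not admissible since the top cell has no cell below it, so $\mathcal{C}^*_{0,1}=\emptyset$.) For $1\le i\le 2n+1$, $v_{n,i}$ is the number of elements of $\mathcal{C}^*_{n,1}$ whose top cell contains $i$. Here $(2n-1)!!=1\cdot3\cdots(2n-1)$. *)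

theory Defs
  imports Main
begin

text \<open>A filling of the three-row shape for a given n is encoded as a triple
  (t, ms, bs): t is the entry of the top cell (column 1), ms ! j is the entry of the
  middle-row cell in column j+1, bs ! j is the entry of the bottom-row cell in
  column j+1 (0-based list indices).\<close>

type_synonym filling = "nat \<times> nat list \<times> nat list"

definition C_star :: "nat \<Rightarrow> filling set" where
  "C_star n = {(t, ms, bs).
      n \<ge> 1 \<and> length ms = n \<and> length bs = n \<and>
      distinct (t # ms @ bs) \<and> set (t # ms @ bs) = {1..2*n+1} \<and>
      sorted_wrt (<) ms \<and>
      (\<forall>j<n. bs ! j < ms ! j) \<and>
      ms ! 0 < t}"

definition v :: "nat \<Rightarrow> nat \<Rightarrow> nat" where
  "v n i = card {F \<in> C_star n. fst F = i}"

definition odd_dfact :: "nat \<Rightarrow> nat" where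
  "odd_dfact n = (\<Prod>k=1..n. 2*k - 1)"

end

theory Submission
  imports Defs "HOL-Combinatorics.Transposition"
begin

text \<open>If the top entry of a filling in C*(n) is not the maximum 2n+1, then 2n+1 ends the
  middle row. Deleting this last column, with bottom entry b, and closing the gap left by b
  gives a filling in C*(n-1); conversely every filling in C*(n-1) together with any
  b \<in> {1..2n} arises in this way. The top entry becomes i either when it was i and b > i
  (2n - i choices) or when it was i - 1 and b < i (i - 1 choices). For n \<ge> 2, exchanging
  the labels 2n and 2n+1 matches the fillings with top 2n+1 with those with top 2n, so
  v(n, 2n+1) = v(n, 2n) = (2n-1) v(n-1, 2n-1).\<close>

definition relabel :: "(nat \<Rightarrow> nat) \<Rightarrow> filling \<Rightarrow> filling" where
  "relabel f = (\<lambda>(t, ms, bs). (f t, map f ms, map f bs))"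

definition entries :: "filling \<Rightarrow> nat set" where
  "entries = (\<lambda>(t, ms, bs). insert t (set ms \<union> set bs))"

definition ordered_filling :: "filling \<Rightarrow> bool" where
  "ordered_filling = (\<lambda>(t, ms, bs). ms \<noteq> [] \<and> length bs = length ms \<and> sorted_wrt (<) ms \<and>
     (\<forall>j<length ms. bs ! j < ms ! j) \<and> hd ms < t)"

lemma fst_relabel: "fst (relabel f F) = f (fst F)"
  by (simp add: relabel_def split: prod.splits)

lemma relabel_involution: "(\<And>x. f (f x) = x) \<Longrightarrow> relabel f (relabel f F) = F"
  by (simp add: relabel_def map_idI split: prod.splits)

lemma inj_relabel: "inj f \<Longrightarrow> inj (relabel f)"
  by (auto simp: inj_def relabel_def inj_map_eq_map split: prod.splits)

lemma entries_relabel: "entries (relabel f F) = f ` entries F"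
  by (auto simp: entries_def relabel_def split: prod.splits)

lemma C_star_iff:
  "(t, ms, bs) \<in> C_star n \<longleftrightarrow>
     length ms = n \<and> entries (t, ms, bs) = {1..2*n+1} \<and> ordered_filling (t, ms, bs)"
proof -
  have "distinct (t # ms @ bs)"
    if "length ms = n" "length bs = n" "set (t # ms @ bs) = {1..2*n+1}"
    using that by (intro card_distinct) simp
  then show ?thesis
    by (auto simp: C_star_def entries_def ordered_filling_def hd_conv_nth Suc_le_eq)
qed

lemma C_star_0: "C_star 0 = {}"
  by (auto simp: C_star_def)

lemma finite_C_star: "finite (C_star n)"
proof (rule finite_subset)
  let ?L = "{xs. set xs \<subseteq> {..2*n+1} \<and> length xs = n}"
  show "C_star n \<subseteq> {..2*n+1} \<times> ?L \<times> ?L"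
    by (auto simp: C_star_def)
  show "finite ({..2*n+1} \<times> ?L \<times> ?L)"
    by (intro finite_cartesian_product finite_lists_length_eq) auto
qed

lemma ordered_filling_relabel:
  assumes "ordered_filling (t, ms, bs)" and "strict_mono_on A f"
    and "set ms \<union> set bs \<subseteq> A" and "f (hd ms) < f t"
  shows "ordered_filling (relabel f (t, ms, bs))"
proof -
  have mono: "f x < f y" if "x \<in> set ms \<union> set bs" "y \<in> set ms \<union> set bs" "x < y" for x y
    using that assms(2,3) by (auto intro: monotone_onD)
  from assms(1) have "sorted_wrt (<) (map f ms)"
    by (intro sorted_wrt_map_mono[where R = "(<)"]) (auto simp: ordered_filling_def mono)
  moreover have "map f bs ! j < map f ms ! j" if "j < length ms" for j
    using assms(1) that by (auto simp: ordered_filling_def intro!: mono)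
  ultimately show ?thesis
    using assms(1,4) by (auto simp: ordered_filling_def relabel_def hd_map)
qed

lemma ordered_filling_snoc_column:
  assumes "ms \<noteq> []"
  shows "ordered_filling (t, ms @ [c], bs @ [b]) \<longleftrightarrow>
    ordered_filling (t, ms, bs) \<and> b < c \<and> (\<forall>x\<in>set ms. x < c)"
proof -
  have "(\<forall>j<Suc (length ms). (bs @ [b]) ! j < (ms @ [c]) ! j) \<longleftrightarrow>
      (\<forall>j<length ms. bs ! j < ms ! j) \<and> b < c" if "length bs = length ms"
    using that by (auto simp: nth_append less_Suc_eq)
  then show ?thesis
    using assms by (auto simp: ordered_filling_def sorted_wrt_append)
qed

lemma max_entry_last_middle:
  assumes "(t, ms, bs) \<in> C_star n" and "t \<noteq> 2*n+1"
  shows "last ms = 2*n+1"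
proof -
  from assms(1) have len: "length ms = n" "length bs = n" and ms: "ms \<noteq> []"
    and E: "entries (t, ms, bs) = {1..2*n+1}" and ord: "ordered_filling (t, ms, bs)"
    by (auto simp: C_star_iff ordered_filling_def)
  have le_last: "x \<le> last ms" if x: "x \<in> set ms" for x
  proof -
    obtain j where j: "j < n" "ms ! j = x"
      using x len by (auto simp: in_set_conv_nth)
    have "sorted_wrt (<) ms"
      using ord by (simp add: ordered_filling_def)
    then have "ms ! j \<le> ms ! (n - 1)"
      using j len by (cases "j = n - 1") (auto simp: less_imp_le sorted_wrt_iff_nth_less)
    then show ?thesis
      using j ms len by (simp add: last_conv_nth)
  qed
  have bound: "x \<le> 2*n+1" if "x \<in> set ms \<union> set bs" for x
    using that E by (auto simp: entries_def)
  have "2*n+1 \<notin> set bs"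
  proof
    assume "2*n+1 \<in> set bs"
    then obtain j where "j < n" "bs ! j = 2*n+1"
      using len by (auto simp: in_set_conv_nth)
    moreover have "ms ! j \<le> 2*n+1"
      using \<open>j < n\<close> len bound by simp
    ultimately show False
      using ord len by (auto simp: ordered_filling_def)
  qed
  then have "2*n+1 \<in> set ms"
    using E assms(2) by (auto simp: entries_def)
  then show ?thesis
    using le_last bound ms by (metis Un_iff antisym last_in_set)
qed

definition shift_up :: "nat \<Rightarrow> nat \<Rightarrow> nat" where
  "shift_up b x = (if x < b then x else Suc x)"

definition shift_down :: "nat \<Rightarrow> nat \<Rightarrow> nat" where
  "shift_down b x = (if x < b then x else x - 1)"

lemma shift_up_shift_down: "x \<noteq> b \<Longrightarrow> shift_up b (shift_down b x) = x"
  by (auto simp: shift_up_def shift_down_def)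

lemma strict_mono_shift_up: "strict_mono (shift_up b)"
  by (auto simp: strict_mono_def shift_up_def)

lemma strict_mono_on_shift_down: "strict_mono_on (- {b}) (shift_down b)"
  by (auto simp: strict_mono_on_def shift_down_def)

lemma shift_up_eq_iff: "shift_up b x = i \<longleftrightarrow> (x = i \<and> i < b) \<or> (Suc x = i \<and> b < i)"
  by (auto simp: shift_up_def)

lemma shift_up_image_atLeastAtMost:
  assumes "b \<in> {1..Suc N}"
  shows "shift_up b ` {1..N} = {1..Suc N} - {b}"
proof
  show "shift_up b ` {1..N} \<subseteq> {1..Suc N} - {b}"
    by (auto simp: shift_up_def)
  show "{1..Suc N} - {b} \<subseteq> shift_up b ` {1..N}"
  proof
    fix y assume y: "y \<in> {1..Suc N} - {b}"
    then have "shift_down b y \<in> {1..N}"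
      using assms by (auto simp: shift_down_def)
    then show "y \<in> shift_up b ` {1..N}"
      using y by (metis DiffD2 image_eqI insertI1 shift_up_shift_down)
  qed
qed

definition insert_column :: "nat \<Rightarrow> nat \<Rightarrow> filling \<Rightarrow> filling" where
  "insert_column c b F =
     (case relabel (shift_up b) F of (t, ms, bs) \<Rightarrow> (t, ms @ [c], bs @ [b]))"

lemma fst_insert_column [simp]: "fst (insert_column c b F) = shift_up b (fst F)"
  by (simp add: insert_column_def relabel_def split: prod.splits)

lemma inj_insert_column: "inj (\<lambda>(b, F). insert_column c b F)"
proof (rule injI, clarify)
  fix b F b' F'
  assume "insert_column c b F = insert_column c b' F'"
  then have "b = b'" and "relabel (shift_up b) F = relabel (shift_up b) F'"
    by (auto simp: insert_column_def split: prod.splits)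
  moreover have "inj (relabel (shift_up b))"
    by (intro inj_relabel strict_mono_imp_inj_on strict_mono_shift_up)
  ultimately show "b = b' \<and> F = F'"
    by (simp add: inj_eq)
qed

lemma insert_column_in_C_star:
  assumes F: "F \<in> C_star m" and b: "b \<in> {1..2*m+2}"
  shows "insert_column (2*m+3) b F \<in> C_star (Suc m)"
proof -
  obtain t ms bs where F_eq: "F = (t, ms, bs)"
    by (cases F)
  from F have len: "length ms = m" and E: "entries F = {1..2*m+1}"
    and ord: "ordered_filling (t, ms, bs)"
    by (auto simp: F_eq C_star_iff)
  obtain t' ms' bs' where R: "relabel (shift_up b) F = (t', ms', bs')"
    by (cases "relabel (shift_up b) F")
  have img: "shift_up b ` {1..2*m+1} = {1..2*m+2} - {b}"
    using b shift_up_image_atLeastAtMost[of b "2*m+1"] by simp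
  have "entries (t', ms', bs') = shift_up b ` entries F"
    by (metis R entries_relabel)
  also have "\<dots> = {1..2*m+2} - {b}"
    by (simp only: E img)
  finally have E': "entries (t', ms', bs') = {1..2*m+2} - {b}" .
  have "ordered_filling (t', ms', bs')"
    unfolding R[symmetric] F_eq using ord
    by (rule ordered_filling_relabel[OF _ strict_mono_shift_up])
      (use ord in \<open>auto simp: ordered_filling_def strict_mono_less[OF strict_mono_shift_up]\<close>)
  moreover have "ms' \<noteq> []" and "length ms' = m"
    using R ord len by (auto simp: F_eq relabel_def ordered_filling_def)
  moreover have "x < 2*m+3" if "x \<in> set ms'" for x
  proof -
    have "x \<in> entries (t', ms', bs')"
      using that by (simp add: entries_def)
    then show ?thesis
      unfolding E' by simp
  qed
  moreover have "entries (t', ms' @ [2*m+3], bs' @ [b]) =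
      insert (2*m+3) (insert b (entries (t', ms', bs')))"
    by (auto simp: entries_def)
  moreover have "insert (2*m+3) (insert b ({1..2*m+2} - {b})) = {1..2*(Suc m)+1}"
    using b by auto
  moreover have "insert_column (2*m+3) b F = (t', ms' @ [2*m+3], bs' @ [b])"
    by (simp add: insert_column_def R)
  ultimately show ?thesis
    using b E' by (simp add: C_star_iff ordered_filling_snoc_column)
qed
lemma insert_column_relabel_shift_down:
  assumes "b \<notin> entries (t, ms, bs)"
  shows "insert_column c b (relabel (shift_down b) (t, ms, bs)) = (t, ms @ [c], bs @ [b])"
proof -
  have "relabel (shift_up b) (relabel (shift_down b) (t, ms, bs)) = (t, ms, bs)"
    using assms by (auto simp: relabel_def entries_def intro!: map_idI shift_up_shift_down)
  then show ?thesis
    by (simp add: insert_column_def)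
qed

lemma remove_column_in_C_star:
  assumes G: "(t, ms @ [2*m+3], bs @ [b]) \<in> C_star (Suc m)" and ms: "ms \<noteq> []"
  shows "b \<in> {1..2*m+2}" and "relabel (shift_down b) (t, ms, bs) \<in> C_star m"
    and "insert_column (2*m+3) b (relabel (shift_down b) (t, ms, bs)) =
      (t, ms @ [2*m+3], bs @ [b])"
proof -
  let ?F = "relabel (shift_down b) (t, ms, bs)"
  have dist: "distinct (t # (ms @ [2*m+3]) @ bs @ [b])"
    using G by (simp add: C_star_def)
  have E: "entries (t, ms @ [2*m+3], bs @ [b]) = {1..2*m+3}"
    and ord: "ordered_filling (t, ms @ [2*m+3], bs @ [b])" and len: "length ms = m"
    using G by (simp_all add: C_star_iff)
  have b_notin: "b \<notin> entries (t, ms, bs)" and c_notin: "2*m+3 \<notin> entries (t, ms, bs)"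
    using dist by (auto simp: entries_def)
  show F_back: "insert_column (2*m+3) b ?F = (t, ms @ [2*m+3], bs @ [b])"
    using b_notin by (rule insert_column_relabel_shift_down)
  have "entries (t, ms @ [2*m+3], bs @ [b]) =
      insert b (insert (2*m+3) (entries (t, ms, bs)))"
    by (auto simp: entries_def)
  then have "entries (t, ms, bs) = {1..2*m+3} - {b, 2*m+3}"
    using b_notin c_notin unfolding E by blast
  also have "\<dots> = {1..2*m+2} - {b}"
    by auto
  finally have E0: "entries (t, ms, bs) = {1..2*m+2} - {b}" .
  have "b \<in> entries (t, ms @ [2*m+3], bs @ [b])" "b \<noteq> 2*m+3"
    using dist by (auto simp: entries_def)
  then show b_range: "b \<in> {1..2*m+2}"
    unfolding E by auto
  have "shift_up b ` {1..2*m+1} = {1..2*m+2} - {b}"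
    using b_range shift_up_image_atLeastAtMost[of b "2*m+1"] by simp
  also have "\<dots> = shift_up b ` entries ?F"
    using F_back by (auto simp: E0 insert_column_def simp flip: entries_relabel split: prod.splits)
  finally have "entries ?F = {1..2*m+1}"
    using strict_mono_imp_inj_on[OF strict_mono_shift_up] by (simp add: inj_image_eq_iff)
  moreover have "ordered_filling ?F"
  proof (rule ordered_filling_relabel[OF _ strict_mono_on_shift_down])
    show "ordered_filling (t, ms, bs)"
      using ord ms by (simp add: ordered_filling_snoc_column)
    show "set ms \<union> set bs \<subseteq> - {b}"
      using b_notin by (auto simp: entries_def)
    have "hd ms < t"
      using ord ms by (simp add: ordered_filling_def)
    moreover have "hd ms \<in> - {b}" "t \<in> - {b}"
      using b_notin ms by (auto simp: entries_def)
    ultimately show "shift_down b (hd ms) < shift_down b t"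
      by (intro monotone_onD[OF strict_mono_on_shift_down])
  qed
  ultimately show "?F \<in> C_star m"
    using len by (simp add: relabel_def C_star_iff)
qed

lemma C_star_Suc_eq_insert_column:
  assumes m: "1 \<le> m" and G: "G \<in> C_star (Suc m)" and top: "fst G \<noteq> 2*m+3"
  obtains b F where "b \<in> {1..2*m+2}" "F \<in> C_star m" "G = insert_column (2*m+3) b F"
proof -
  obtain t ms bs where G_eq: "G = (t, ms, bs)"
    by (cases G)
  have len: "length ms = Suc m" "length bs = Suc m"
    using G by (auto simp: G_eq C_star_iff ordered_filling_def)
  have "last ms = 2*m+3"
    using max_entry_last_middle[of t ms bs "Suc m"] G top by (simp add: G_eq)
  then have "G = (t, butlast ms @ [2*m+3], butlast bs @ [last bs])"
    using len G_eq by (metis append_butlast_last_id list.size(3) nat.distinct(1))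
  moreover have "butlast ms \<noteq> []"
    using len m by (metis length_butlast diff_Suc_1 list.size(3) not_one_le_zero)
  ultimately show ?thesis
    using G remove_column_in_C_star that by metis
qed

lemma v_Suc:
  assumes m: "1 \<le> m" and i: "1 \<le> i" "i \<le> 2*m+2"
  shows "v (Suc m) i = (2*m+2-i) * v m i + (i-1) * v m (i-1)"
proof -
  define A where "A j = {F \<in> C_star m. fst F = j}" for j
  define S where "S = {(b, F). b \<in> {1..2*m+2} \<and> F \<in> C_star m \<and> shift_up b (fst F) = i}"
  let ?ins = "\<lambda>(b, F). insert_column (2*m+3) b F"
  have "{G \<in> C_star (Suc m). fst G = i} = ?ins ` S"
  proof
    show "?ins ` S \<subseteq> {G \<in> C_star (Suc m). fst G = i}"
      by (auto simp: S_def insert_column_in_C_star)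
    show "{G \<in> C_star (Suc m). fst G = i} \<subseteq> ?ins ` S"
    proof clarify
      fix G assume G: "G \<in> C_star (Suc m)" and "i = fst G"
      then have "fst G \<noteq> 2*m+3"
        using i by simp
      then obtain b F where "b \<in> {1..2*m+2}" "F \<in> C_star m" "G = insert_column (2*m+3) b F"
        using C_star_Suc_eq_insert_column[OF m G] by blast
      then show "G \<in> ?ins ` S"
        using \<open>i = fst G\<close> by (force simp: S_def)
    qed
  qed
  then have "v (Suc m) i = card S"
    by (simp add: v_def card_image inj_on_subset[OF inj_insert_column])
  also have "S = {i<..2*m+2} \<times> A i \<union> {1..<i} \<times> A (i-1)"
    using i by (auto simp: S_def A_def shift_up_eq_iff)
  also have "card \<dots> = (2*m+2-i) * card (A i) + (i-1) * card (A (i-1))"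
    by (subst card_Un_disjoint) (auto simp: card_cartesian_product A_def finite_C_star)
  finally show ?thesis
    by (simp add: v_def A_def)
qed

lemma strict_mono_on_transpose_adjacent:
  "c \<in> {a, a+1} \<Longrightarrow> strict_mono_on (- {c}) (transpose (a::nat) (a+1))"
  by (auto simp: strict_mono_on_def transpose_def)

lemma C_star_top_notin:
  "(t, ms, bs) \<in> C_star n \<Longrightarrow> t \<notin> set ms \<union> set bs"
  by (simp add: C_star_def)

lemma relabel_transpose_in_C_star:
  assumes n: "2 \<le> n" and F: "(t, ms, bs) \<in> C_star n" and t: "t \<in> {2*n, 2*n+1}"
  shows "relabel (transpose (2*n) (2*n+1)) (t, ms, bs) \<in> C_star n"
proof -
  let ?\<tau> = "transpose (2*n) (2*n+1)"
  from F have len: "length ms = n" and E: "entries (t, ms, bs) = {1..2*n+1}"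
    and ord: "ordered_filling (t, ms, bs)"
    by (simp_all add: C_star_iff)
  have t_notin: "t \<notin> set ms \<union> set bs"
    using F by (rule C_star_top_notin)
  have "hd ms < 2*n"
  proof -
    have "hd ms < ms ! 1" and "hd ms < t"
      using ord len n by (auto simp: ordered_filling_def hd_conv_nth sorted_wrt_iff_nth_less)
    moreover have "ms ! 1 \<in> entries (t, ms, bs)" and "ms ! 1 \<noteq> t"
      using len n t_notin by (auto simp: entries_def)
    ultimately show ?thesis
      using t unfolding E by auto
  qed
  then have "?\<tau> (hd ms) < ?\<tau> t"
    using t by auto
  then have "ordered_filling (relabel ?\<tau> (t, ms, bs))"
    using t t_notin
    by (intro ordered_filling_relabel[OF ord strict_mono_on_transpose_adjacent[of t]]) auto
  moreover have "entries (relabel ?\<tau> (t, ms, bs)) = {1..2*n+1}"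
    unfolding entries_relabel E by (rule transpose_image_eq) (use n in simp)
  ultimately show ?thesis
    using len by (simp add: relabel_def C_star_iff)
qed

lemma v_top_max_eq:
  assumes n: "2 \<le> n"
  shows "v n (2*n+1) = v n (2*n)"
proof -
  let ?\<tau> = "transpose (2*n) (2*n+1)"
  have maps: "relabel ?\<tau> F \<in> C_star n" if "F \<in> C_star n" "fst F \<in> {2*n, 2*n+1}" for F
    using that relabel_transpose_in_C_star[OF n, of "fst F" "fst (snd F)" "snd (snd F)"] by simp
  have "bij_betw (relabel ?\<tau>) {F \<in> C_star n. fst F = 2*n+1} {F \<in> C_star n. fst F = 2*n}"
    by (rule bij_betw_byWitness[where f' = "relabel ?\<tau>"])
      (use maps in \<open>auto simp: relabel_involution fst_relabel\<close>)
  then show ?thesis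
    unfolding v_def by (rule bij_betw_same_card)
qed

lemma C_star_1: "C_star 1 = {(3, [2], [1])}"
proof
  show "{(3, [2], [1])} \<subseteq> C_star 1"
    by (auto simp: C_star_def)
  show "C_star 1 \<subseteq> {(3, [2], [1])}"
  proof
    fix F assume F: "F \<in> C_star 1"
    then obtain t a c where F_eq: "F = (t, [a], [c])"
      by (auto simp: C_star_def length_Suc_conv)
    with F have "{t, a, c} = {1..3}" "c < a" "a < t"
      by (auto simp: C_star_def)
    moreover from this(1) have "t \<le> 3" "1 \<le> c"
      by (metis atLeastAtMost_iff insertCI)+
    ultimately show "F \<in> {(3, [2], [1])}"
      by (auto simp: F_eq)
  qed
qed

lemma v_top_max_eq_odd_dfact: "1 \<le> n \<Longrightarrow> v n (2*n+1) = odd_dfact n"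
proof (induction n rule: dec_induct)
  case base
  show ?case
    unfolding v_def C_star_1 by (simp add: odd_dfact_def Collect_conv_if)
next
  case (step m)
  have "v (Suc m) (2 * Suc m + 1) = v (Suc m) (2 * Suc m)"
    using step.hyps by (intro v_top_max_eq) simp
  also have "\<dots> = (2*m+1) * v m (2*m+1)"
    using v_Suc[OF step.hyps(1), of "2*m+2"] by simp
  also have "\<dots> = odd_dfact (Suc m)"
    using step.IH by (simp add: odd_dfact_def)
  finally show ?case .
qed

theorem lemma19:
  fixes n :: nat
  assumes "n \<ge> 1"
  shows "(\<forall>i. 1 \<le> i \<and> i \<le> 2*n \<longrightarrow>
            v n i = (2*n - i) * v (n-1) i + (i-1) * v (n-1) (i-1))
         \<and> v n (2*n+1) = odd_dfact n"
proof (intro conjI allI impI)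
  show "v n (2*n+1) = odd_dfact n"
    using assms by (rule v_top_max_eq_odd_dfact)
next
  fix i assume i: "1 \<le> i \<and> i \<le> 2*n"
  show "v n i = (2*n - i) * v (n-1) i + (i-1) * v (n-1) (i-1)"
  proof (cases "n = 1")
    case True
    then show ?thesis
      using i unfolding True v_def C_star_1 by (simp add: C_star_0)
  next
    case False
    then obtain m where "n = Suc m" "1 \<le> m"
      using assms by (cases n) auto
    then show ?thesis
      using v_Suc[of m i] i by simp
  qed
qed

end
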